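(* Let $\mathcal{L}$ be the set of the $81$ lines in $\mathbb{P}^2_{\mathbb{C}}$ that contain at least three sextactic points of the Fermat cubic (see context). For each $L\in\mathcal{L}$ choose a linear form $\ell_L\in\mathbb{C}[x,y,z]$ defining $L$. Then there is a nonzero constant $c\in\mathbb{C}$ such that $$c\prod_{L\in\mathcal{L}}\ell_L\in\mathbb{Z}[x,y,z].$$ That is, the product of the equations of the $81$ lines is defined over $\mathbb{Z}$.
   Context: $F\subset\mathbb{P}^2_{\mathbb{C}}$ is the Fermat cubic $x^3+y^3+z^3=0$. The set of its sextactic points is $$S=\{[x:y:z]\in\mathbb{P}^2: x^3+y^3+z^3=0,\ (x^3-y^3)(y^3-z^3)(z^3-x^3)=0\}.$$ These are the $27$ points of $F$ at which the osculating conic has local contact order at least $6$ with $F$. There are exactly $81$ lines containing at least (in fact exactly) three points of $S$. *)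

theory Defs
  imports Complex_Main "HOL-Library.Poly_Mapping"
begin

text \<open>Homogeneous coordinates: a point of P^2(C) is represented by a nonzero
  vector of C^3 (a triple), two vectors representing the same point iff proportional.\<close>

type_synonym vec3 = "complex \<times> complex \<times> complex"

definition nonzero3 :: "vec3 \<Rightarrow> bool" where
  "nonzero3 v \<longleftrightarrow> v \<noteq> (0, 0, 0)"

definition same_point :: "vec3 \<Rightarrow> vec3 \<Rightarrow> bool" where
  "same_point u v \<longleftrightarrow> (\<exists>t::complex. t \<noteq> 0 \<and>
      u = (t * fst v, t * fst (snd v), t * snd (snd v)))"

definition sextactic :: "vec3 \<Rightarrow> bool" where
  "sextactic v \<longleftrightarrow> (case v of (x, y, z) \<Rightarrow>
      nonzero3 v \<and> x^3 + y^3 + z^3 = 0 \<and> (x^3 - y^3) * (y^3 - z^3) * (z^3 - x^3) = 0)"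

definition line_of :: "vec3 \<Rightarrow> vec3 set" where
  "line_of a = {v. nonzero3 v \<and>
      fst a * fst v + fst (snd a) * fst (snd v) + snd (snd a) * snd (snd v) = 0}"

definition is_line :: "vec3 set \<Rightarrow> bool" where
  "is_line L \<longleftrightarrow> (\<exists>a. nonzero3 a \<and> L = line_of a)"

definition sextactic_lines :: "vec3 set set" where
  "sextactic_lines = {L. is_line L \<and>
     (\<exists>p q r. p \<in> L \<and> q \<in> L \<and> r \<in> L \<and> sextactic p \<and> sextactic q \<and> sextactic r \<and>
        \<not> same_point p q \<and> \<not> same_point q r \<and> \<not> same_point p r)}"

text \<open>Polynomials in C[x,y,z]: finitely supported maps from monomials
  (exponent vectors as finitely supported nat-valued maps, variables 0,1,2) to coefficients.\<close>
type_synonym cpoly3 = "(nat \<Rightarrow>\<^sub>0 nat) \<Rightarrow>\<^sub>0 complex"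

definition pconst :: "complex \<Rightarrow> cpoly3" where
  "pconst c = Poly_Mapping.single 0 c"

definition pvar :: "nat \<Rightarrow> cpoly3" where
  "pvar i = Poly_Mapping.single (Poly_Mapping.single i 1) 1"

definition linform :: "vec3 \<Rightarrow> cpoly3" where
  "linform a = pconst (fst a) * pvar 0 + pconst (fst (snd a)) * pvar 1 + pconst (snd (snd a)) * pvar 2"

definition integral_poly :: "cpoly3 \<Rightarrow> bool" where
  "integral_poly p \<longleftrightarrow> (\<forall>m. Poly_Mapping.lookup p m \<in> \<int>)"

end

theory Submission
  imports Defs "HOL-Library.Product_Plus"
begin

text \<open>Let \<open>\<theta>\<close> be the real cube root of 2 and \<open>\<omega>\<close> be a primitive cube root of unity. The 27 sextactic points are,
  up to scaling and cyclic permutation of coordinates, the points \<open>(1, \<omega>\<^sup>a, -\<theta>\<omega>\<^sup>b)\<close>, and the 81 lines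
  through three of them fall into three Galois-stable families: the 9 lines \<open>x = \<omega>\<^sup>i y\<close> (and cyclic
  shifts), the 18 lines \<open>z + \<theta>\<omega>\<^sup>k x = 0\<close> (and permutations), and the 54 lines
  \<open>(1 + \<theta>)\<omega>\<^sup>i x + (\<theta>\<^sup>2\<omega> - 1)\<omega>\<^sup>j y + (1 + \<theta>\<omega>) z = 0\<close> (and permutations). Multiplying the forms of
  each family, the sums and differences of cubes collapse through the identities
  \<open>(x - y)(x - \<omega>y)(x - \<omega>\<^sup>2y) = x\<^sup>3 - y\<^sup>3\<close> and \<open>\<theta>\<^sup>3 = 2\<close>; for the last family the product is
  \<open>(3(\<theta>\<omega>\<^sup>2 - 1))\<^sup>1\<^sup>8\<close> times an explicit integral polynomial.

  That these are all the lines is a finite computation in \<open>\<int>[\<theta>, \<omega>]\<close>: exact arithmetic there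
  certifies incidences, and the ring map \<open>\<theta> \<mapsto> 4, \<omega> \<mapsto> 5\<close> to \<open>\<int>/31\<close> certifies that
  determinants do not vanish.\<close>

section \<open>Vectors with three coordinates\<close>

fun dot3 :: "'a::comm_ring_1 \<times> 'a \<times> 'a \<Rightarrow> 'a \<times> 'a \<times> 'a \<Rightarrow> 'a" where
  "dot3 (a, b, c) (d, e, f) = a*d + b*e + c*f"

fun cross3 :: "'a::comm_ring_1 \<times> 'a \<times> 'a \<Rightarrow> 'a \<times> 'a \<times> 'a \<Rightarrow> 'a \<times> 'a \<times> 'a" where
  "cross3 (a, b, c) (d, e, f) = (b*f - c*e, c*d - a*f, a*e - b*d)"

fun scale3 :: "'a::comm_ring_1 \<Rightarrow> 'a \<times> 'a \<times> 'a \<Rightarrow> 'a \<times> 'a \<times> 'a" where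
  "scale3 c (a, b, d) = (c*a, c*b, c*d)"

fun map3 :: "('a \<Rightarrow> 'b) \<Rightarrow> 'a \<times> 'a \<times> 'a \<Rightarrow> 'b \<times> 'b \<times> 'b" where
  "map3 h (a, b, c) = (h a, h b, h c)"

definition permute3 :: "nat \<Rightarrow> 'a \<times> 'a \<times> 'a \<Rightarrow> 'a \<times> 'a \<times> 'a" where
  "permute3 k v = (case v of (x, y, z) \<Rightarrow> [(x, y, z), (y, z, x), (z, x, y), (y, x, z), (z, y, x), (x, z, y)] ! k)"

lemma cross3_anticomm: "cross3 v u = - cross3 u v"
  by (cases u; cases v) (simp add: algebra_simps)

lemma cross3_cross3: "cross3 a (cross3 u v) = scale3 (dot3 a v) u - scale3 (dot3 a u) v"
  by (cases a; cases u; cases v) (simp add: algebra_simps)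

lemma scale3_scale3: "scale3 c (scale3 d v) = scale3 (c * d) v"
  by (cases v) (simp add: algebra_simps)

lemma dot3_scale3_left: "dot3 (scale3 c a) v = c * dot3 a v"
  by (cases a; cases v) (simp add: algebra_simps)

lemma dot3_scale3_right: "dot3 a (scale3 c v) = c * dot3 a v"
  by (cases a; cases v) (simp add: algebra_simps)

lemma map3_permute3:
  assumes "k < 6"
  shows "map3 h (permute3 k v) = permute3 k (map3 h v)"
proof -
  obtain x y z where v: "v = (x, y, z)" by (metis prod_cases3)
  have "map3 h ([(x, y, z), (y, z, x), (z, x, y), (y, x, z), (z, y, x), (x, z, y)] ! k)
      = map (map3 h) [(x, y, z), (y, z, x), (z, x, y), (y, x, z), (z, y, x), (x, z, y)] ! k"
    using assms by (simp only: nth_map length_Cons list.size)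
  then show ?thesis by (simp add: v permute3_def)
qed

lemma cross3_eq_0_imp_scale3:
  fixes a n :: "'a::field \<times> 'a \<times> 'a"
  assumes "cross3 a n = 0" and "n \<noteq> 0"
  shows "\<exists>c. a = scale3 c n"
proof -
  obtain a1 a2 a3 n1 n2 n3 where an: "a = (a1, a2, a3)" "n = (n1, n2, n3)" by (metis prod_cases3)
  have eqs: "a2*n3 = a3*n2" "a3*n1 = a1*n3" "a1*n2 = a2*n1"
    using assms(1) by (simp_all add: an zero_prod_def)
  consider "n1 \<noteq> 0" | "n2 \<noteq> 0" | "n3 \<noteq> 0" using assms(2) by (auto simp: an zero_prod_def)
  then show ?thesis
  proof cases
    case 1 then show ?thesis using eqs by (intro exI[of _ "a1/n1"]) (auto simp: an field_simps)
  next
    case 2 then show ?thesis using eqs by (intro exI[of _ "a2/n2"]) (auto simp: an field_simps)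
  next
    case 3 then show ?thesis using eqs by (intro exI[of _ "a3/n3"]) (auto simp: an field_simps)
  qed
qed

lemma orthogonal_imp_scale3_cross3:
  fixes a u v :: "'a::field \<times> 'a \<times> 'a"
  assumes "dot3 a u = 0" and "dot3 a v = 0" and "cross3 u v \<noteq> 0"
  shows "\<exists>c. a = scale3 c (cross3 u v)"
  using assms cross3_eq_0_imp_scale3[of a "cross3 u v"] cross3_cross3[of a u v]
  by (cases u; cases v) (simp add: zero_prod_def)

section \<open>Identities with cube roots of unity and of 2\<close>

definition circulant_det :: "'a::comm_ring_1 \<Rightarrow> 'a \<Rightarrow> 'a \<Rightarrow> 'a" where
  "circulant_det a b c = a^3 + b^3 + c^3 - 3*a*b*c"

lemma cube_binomial_root_of_unity:
  fixes e s r :: "'a::comm_ring_1"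
  assumes "e^3 = 1"
  shows "(s + e*r)^3 = (s^3 + r^3) + 3*s^2*r*e + 3*s*r^2*e^2"
proof -
  have "(s + e*r)^3 = (s^3 + r^3) + 3*s^2*r*e + 3*s*r^2*e^2 + (e^3 - 1)*r^3"
    by (simp add: algebra_simps power2_eq_square power3_eq_cube)
  then show ?thesis using assms by simp
qed

lemma quadratic_of_cube_root_of_unity:
  fixes e :: "'a::comm_ring_1"
  assumes "e^3 = 1"
  shows "(a + b*e + c*e^2)^2 + p*(a + b*e + c*e^2) + r
    = (a^2 + 2*b*c + p*a + r) + (2*a*b + c^2 + p*b)*e + (2*a*c + b^2 + p*c)*e^2"
proof -
  have "(a + b*e + c*e^2)^2 + p*(a + b*e + c*e^2) + r
      = (a^2 + 2*b*c + p*a + r) + (2*a*b + c^2 + p*b)*e + (2*a*c + b^2 + p*c)*e^2 + (e^3 - 1)*(2*b*c + c^2*e)"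
    by (simp add: algebra_simps power2_eq_square power3_eq_cube)
  then show ?thesis using assms by simp
qed

lemma norm_pair_expansion:
  fixes e S m L1 L2 :: "'a::comm_ring_1"
  assumes "e^3 = 1"
  defines "A \<equiv> S^3 + 27*m^3" and "B \<equiv> 9*S^2*m" and "C \<equiv> 27*S*m^2"
    and "p \<equiv> -2*(L1^3 + L2^3)" and "r \<equiv> 4*(L1*L2)^3"
  shows "(2*L1^3 - (S + e*(3*m))^3) * (2*L2^3 - (S + e*(3*m))^3)
    = (A^2 + 2*B*C + p*A + r) + (2*A*B + C^2 + p*B)*e + (2*A*C + B^2 + p*C)*e^2"
proof -
  have "(S + e*(3*m))^3 = A + B*e + C*e^2"
    unfolding cube_binomial_root_of_unity[OF assms(1)] A_def B_def C_def
    by (simp add: algebra_simps power2_eq_square power3_eq_cube)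
  moreover have "(2*L1^3 - Y) * (2*L2^3 - Y) = Y^2 + p*Y + r" for Y
    unfolding p_def r_def by (simp add: algebra_simps power2_eq_square power3_eq_cube)
  ultimately show ?thesis unfolding quadratic_of_cube_root_of_unity[OF assms(1), symmetric] by simp
qed

text \<open>The product over \<open>\<epsilon>\<^sup>3 = 1\<close> of the expansions in \<open>norm_pair_expansion\<close>, for
  \<open>L\<^sub>1, L\<^sub>2 = \<omega>u + \<omega>\<^sup>2v + z, \<omega>\<^sup>2u + \<omega>v + z\<close>; here \<open>s1 = L\<^sub>1 + L\<^sub>2\<close> and \<open>s2 = L\<^sub>1L\<^sub>2\<close> are integral.\<close>
definition psi :: "'a::comm_ring_1 \<Rightarrow> 'a \<Rightarrow> 'a \<Rightarrow> 'a \<Rightarrow> 'a" where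
  "psi u v z m = (let S = u + v + z; s1 = 2*z - u - v; s2 = u^2 + v^2 + z^2 - u*v - v*z - z*u;
     A = S^3 + 27*m^3; B = 9*S^2*m; C = 27*S*m^2; p = -2*(s1^3 - 3*s1*s2); r = 4*s2^3
   in circulant_det (A^2 + 2*B*C + p*A + r) (2*A*B + C^2 + p*B) (2*A*C + B^2 + p*C))"

locale cube_roots =
  fixes w t :: "'a::comm_ring_1"
  assumes w_quadratic: "w^2 + w + 1 = 0"
    and t_cube: "t^3 = 2"
begin

lemma w_cube: "w^3 = 1"
proof -
  have "w^3 - 1 = (w - 1) * (w^2 + w + 1)" by (simp add: algebra_simps power2_eq_square power3_eq_cube)
  then show ?thesis using w_quadratic by simp
qed

lemma w_square_cube: "(w^2)^3 = 1"
  by (metis power_mult mult.commute power_one w_cube)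

lemma w_square_square: "(w^2)^2 = w"
proof -
  have "(w^2)^2 = w^3 * w" by (simp add: algebra_simps power2_eq_square power3_eq_cube)
  then show ?thesis using w_cube by simp
qed

lemma sum_cubes_factor: "(x + y) * (x + w*y) * (x + w^2*y) = x^3 + y^3"
proof -
  have "(x + y) * (x + w*y) * (x + w^2*y) = x^3 + y^3 + (w^2 + w + 1) * (x^2*y + x*y^2 + (w - 1)*(x*y^2 + y^3))"
    by (simp add: algebra_simps power2_eq_square power3_eq_cube)
  then show ?thesis using w_quadratic by simp
qed

lemma diff_cubes_factor: "(x - y) * (x - w*y) * (x - w^2*y) = x^3 - y^3"
  using sum_cubes_factor[of x "-y"] by (simp add: power3_eq_cube)

lemma prod_over_cube_roots:
  fixes g :: "'a \<Rightarrow> 'a"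
  assumes "\<And>e. e^3 = 1 \<Longrightarrow> g e = a + b*e + c*e^2"
  shows "g 1 * g w * g (w^2) = circulant_det a b c"
proof -
  have "g 1 * g w * g (w^2) = (a + b + c) * (a + b*w + c*w^2) * (a + b*w^2 + c*w)"
    using assms[of 1] assms[OF w_cube] assms[OF w_square_cube] w_square_square by simp
  also have "\<dots> = circulant_det a b c + (w^2 + w + 1) * (c^3*w - c^3 + b*c^2*w^2 + b^2*c*w^2 - b^3 + b^3*w
      + a*c^2*w + 3*a*b*c - a*b*c*w + a*b*c*w^2 + a*b^2*w + a^2*c + a^2*b)"
    by (simp add: circulant_det_def algebra_simps power2_eq_square power3_eq_cube)
  finally show ?thesis using w_quadratic by simp
qed

lemma grid_product:
  "prod_list (map (\<lambda>i. prod_list (map (\<lambda>j. a * w^i * X + b * w^j * Y + c * Z) [0,1,2])) [0,1,2])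
     = (a^3*X^3 + b^3*Y^3 + c^3*Z^3)^3 - 27 * (a*b*c*X*Y*Z)^3"
proof -
  define s r y where "s = c*Z" "r = a*X" "y = b*Y"
  define g where "g e = (s + e*r)^3 + y^3" for e
  have inner: "prod_list (map (\<lambda>j. a * w^i * X + b * w^j * Y + c * Z) [0,1,2]) = g (w^i)" for i :: nat
  proof -
    have "prod_list (map (\<lambda>j. a * w^i * X + b * w^j * Y + c * Z) [0,1,2])
        = ((s + w^i*r) + y) * ((s + w^i*r) + w*y) * ((s + w^i*r) + w^2*y)"
      by (simp add: s_r_y_def algebra_simps numeral_2_eq_2)
    then show ?thesis unfolding g_def sum_cubes_factor .
  qed
  have "g e = (s^3 + r^3 + y^3) + (3*s^2*r)*e + (3*s*r^2)*e^2" if "e^3 = 1" for e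
    unfolding g_def cube_binomial_root_of_unity[OF that] by (simp add: algebra_simps)
  then have "prod_list (map (\<lambda>i. g (w^i)) [0,1,2]) = circulant_det (s^3 + r^3 + y^3) (3*s^2*r) (3*s*r^2)"
    using prod_over_cube_roots by (simp add: mult.assoc)
  also have "\<dots> = (s^3 + r^3 + y^3)^3 - 27 * (s*r*y)^3"
    by (simp add: circulant_det_def algebra_simps power2_eq_square power3_eq_cube)
  finally show ?thesis
    by (simp only: inner) (simp add: s_r_y_def power_mult_distrib ac_simps)
qed

definition sextic :: "'a \<Rightarrow> 'a \<Rightarrow> 'a \<Rightarrow> 'a \<Rightarrow> 'a" where
  "sextic u v z m = ((t*w - 1)*u + (t*w^2 - 1)*v + (t - 1)*z)^3 - 27*m^3"

lemma cube_one_plus_t: "(1 + t)^3 = 3*(t*w^2 - 1) * (t*w - 1)"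
proof -
  have "(1 + t)^3 = 3*(t*w^2 - 1)*(t*w - 1) + (w^2 + w + 1)*(3*t + 3*t^2 - 3*w*t^2) + (t^3 - 2)"
    by (simp add: algebra_simps power2_eq_square power3_eq_cube)
  then show ?thesis using w_quadratic t_cube by simp
qed

lemma cube_t_square_w_minus_one: "(t^2*w - 1)^3 = 3*(t*w^2 - 1) * (t*w^2 - 1)"
proof -
  have "(t^2*w - 1)^3 = 3*(t*w^2 - 1)*(t*w^2 - 1)
      + (w^2 + w + 1)*(6*t - 3*t*t^3 - (t^3)^2 + 3*w*t^2 + w*(t^3)^2 - 3*w^2*t^2) + (t^3 - 2)*(2 + 3*t + t^3 + 3*w*t)"
    by (simp add: algebra_simps power2_eq_square power3_eq_cube)
  then show ?thesis using w_quadratic t_cube by simp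
qed

lemma cube_one_plus_t_w: "(1 + t*w)^3 = 3*(t*w^2 - 1) * (t - 1)"
proof -
  have "(1 + t*w)^3 = 3*(t*w^2 - 1)*(t - 1) + (w^2 + w + 1)*(3*t - t^3 + w*t^3) + (t^3 - 2)"
    by (simp add: algebra_simps power2_eq_square power3_eq_cube)
  then show ?thesis using w_quadratic t_cube by simp
qed

lemma unit_product: "(t*w - 1) * (t*w^2 - 1) * (t - 1) = 1"
proof -
  have "(t*w - 1) * (t*w^2 - 1) * (t - 1) = 1 + (w^2 + w + 1)*(t - t^3 - w*t^2 + w*t^3) + (t^3 - 2)"
    by (simp add: algebra_simps power2_eq_square power3_eq_cube)
  then show ?thesis using w_quadratic t_cube by simp
qed

lemma grid_product_sextic:
  "prod_list (map (\<lambda>i. prod_list (map (\<lambda>j. (1 + t) * w^i * X + (t^2*w - 1) * w^j * Y + (1 + t*w) * Z)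
      [0,1,2])) [0,1,2])
   = (3*(t*w^2 - 1))^3 * sextic (X^3) (Y^3) (Z^3) (X*Y*Z)"
proof -
  define k Q R P where "k = 3*(t*w^2 - 1)" "Q = t*w - 1" "R = t*w^2 - 1" "P = t - 1"
  have cubes: "(1 + t)^3 = k*Q" "(t^2*w - 1)^3 = k*R" "(1 + t*w)^3 = k*P"
    using cube_one_plus_t cube_t_square_w_minus_one cube_one_plus_t_w
    by (simp_all add: k_Q_R_P_def mult.assoc)
  have unit: "Q*R*P = 1" using unit_product by (simp add: k_Q_R_P_def)
  have "(a*b*c*X*Y*Z)^3 = a^3 * b^3 * c^3 * (X*Y*Z)^3" for a b c
    by (simp add: power_mult_distrib)
  then have "prod_list (map (\<lambda>i. prod_list (map (\<lambda>j. (1 + t) * w^i * X + (t^2*w - 1) * w^j * Y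
        + (1 + t*w) * Z) [0,1,2])) [0,1,2])
      = (k*Q*X^3 + k*R*Y^3 + k*P*Z^3)^3 - 27 * (k*Q * (k*R) * (k*P) * (X*Y*Z)^3)"
    unfolding grid_product by (simp only: cubes)
  also have "\<dots> = k^3 * ((Q*X^3 + R*Y^3 + P*Z^3)^3 - 27*(Q*R*P)*(X*Y*Z)^3)"
    by (simp add: algebra_simps power_mult_distrib power3_eq_cube)
  finally show ?thesis
    by (simp only: unit mult_1_right) (simp add: sextic_def k_Q_R_P_def)
qed

lemma sextic_permutations:
  fixes u v z m :: 'a
  defines "L1 \<equiv> w*u + w^2*v + z" and "L2 \<equiv> w^2*u + w*v + z" and "S \<equiv> u + v + z"
  shows "sextic u v z m = (t*L1 - S)^3 - 27*m^3" "sextic z u v m = (t*w*L1 - S)^3 - 27*m^3"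
    "sextic v z u m = (t*w^2*L1 - S)^3 - 27*m^3" "sextic v u z m = (t*L2 - S)^3 - 27*m^3"
    "sextic u z v m = (t*w^2*L2 - S)^3 - 27*m^3" "sextic z v u m = (t*w*L2 - S)^3 - 27*m^3"
proof -
  have "(t*w - 1)*z + (t*w^2 - 1)*u + (t - 1)*v = t*w*L1 - S + (w^3 - 1)*(-(t*v))"
    "(t*w - 1)*v + (t*w^2 - 1)*z + (t - 1)*u = t*w^2*L1 - S + (w^3 - 1)*(-(t*u) - t*w*v)"
    "(t*w - 1)*u + (t*w^2 - 1)*z + (t - 1)*v = t*w^2*L2 - S + (w^3 - 1)*(-(t*w*u) - t*v)"
    "(t*w - 1)*z + (t*w^2 - 1)*v + (t - 1)*u = t*w*L2 - S + (w^3 - 1)*(-(t*u))"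
    by (simp_all add: L1_def L2_def S_def algebra_simps power2_eq_square power3_eq_cube)
  moreover have "(t*w - 1)*u + (t*w^2 - 1)*v + (t - 1)*z = t*L1 - S"
    "(t*w - 1)*v + (t*w^2 - 1)*u + (t - 1)*z = t*L2 - S"
    by (simp_all add: L1_def L2_def S_def algebra_simps)
  ultimately show "sextic u v z m = (t*L1 - S)^3 - 27*m^3" "sextic z u v m = (t*w*L1 - S)^3 - 27*m^3"
    "sextic v z u m = (t*w^2*L1 - S)^3 - 27*m^3" "sextic v u z m = (t*L2 - S)^3 - 27*m^3"
    "sextic u z v m = (t*w^2*L2 - S)^3 - 27*m^3" "sextic z v u m = (t*w*L2 - S)^3 - 27*m^3"
    unfolding sextic_def using w_cube by simp_all
qed

lemma norm_shifted_cube_difference: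
  "((t*L - S)^3 - 27*m^3) * ((t*w*L - S)^3 - 27*m^3) * ((t*w^2*L - S)^3 - 27*m^3)
   = (2*L^3 - (S + 3*m)^3) * (2*L^3 - (S + w*(3*m))^3) * (2*L^3 - (S + w^2*(3*m))^3)"
proof -
  have split: "(x - S)^3 - 27*m^3 = (x - (S + 3*m)) * (x - (S + w*(3*m))) * (x - (S + w^2*(3*m)))" for x
    using diff_cubes_factor[of "x - S" "3*m"] by (simp add: algebra_simps power3_eq_cube)
  have norm: "(t*L - T) * (t*w*L - T) * (t*w^2*L - T) = 2*L^3 - T^3" for T
  proof -
    have "(T - t*L) * (T - w*(t*L)) * (T - w^2*(t*L)) = T^3 - (t*L)^3" by (rule diff_cubes_factor)
    then show ?thesis using t_cube by (simp add: algebra_simps power_mult_distrib power3_eq_cube)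
  qed
  show ?thesis
    unfolding split norm[symmetric] by (simp only: mult_ac)
qed

lemma twisted_forms_sum_product:
  "(w*u + w^2*v + z) + (w^2*u + w*v + z) = 2*z - u - v"
  "(w*u + w^2*v + z) * (w^2*u + w*v + z) = u^2 + v^2 + z^2 - u*v - v*z - z*u"
proof -
  have "(w*u + w^2*v + z) + (w^2*u + w*v + z) = 2*z - u - v + (w^2 + w + 1)*(u + v)"
    by (simp add: algebra_simps)
  then show "(w*u + w^2*v + z) + (w^2*u + w*v + z) = 2*z - u - v" using w_quadratic by simp
  have "(w*u + w^2*v + z) * (w^2*u + w*v + z) = u^2 + v^2 + z^2 - u*v - v*z - z*u
      + (w^3 - 1)*(u^2 + v^2 + w*u*v) + (w^2 + w + 1)*(u*v + u*z + v*z)"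
    by (simp add: algebra_simps power2_eq_square power3_eq_cube)
  then show "(w*u + w^2*v + z) * (w^2*u + w*v + z) = u^2 + v^2 + z^2 - u*v - v*z - z*u"
    using w_quadratic w_cube by simp
qed

lemma prod_sextic_permutations:
  "sextic u v z m * sextic z u v m * sextic v z u m * sextic v u z m * sextic u z v m * sextic z v u m
   = psi u v z m"
proof -
  define L1 L2 S where "L1 = w*u + w^2*v + z" "L2 = w^2*u + w*v + z" "S = u + v + z"
  define s1 s2 where "s1 = 2*z - u - v" "s2 = u^2 + v^2 + z^2 - u*v - v*z - z*u"
  have sum: "L1 + L2 = s1" and product: "L1 * L2 = s2"
    unfolding L1_L2_S_def s1_s2_def by (rule twisted_forms_sum_product)+
  have p: "-2*(L1^3 + L2^3) = -2*(s1^3 - 3*s1*s2)"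
    unfolding sum[symmetric] product[symmetric] by (simp add: algebra_simps power2_eq_square power3_eq_cube)
  have r: "4*(L1*L2)^3 = 4*s2^3" by (simp add: product)
  define g where "g e = (2*L1^3 - (S + e*(3*m))^3) * (2*L2^3 - (S + e*(3*m))^3)" for e
  have "g 1 * g w * g (w^2) = circulant_det
      ((S^3 + 27*m^3)^2 + 2*(9*S^2*m)*(27*S*m^2) + (-2*(L1^3 + L2^3))*(S^3 + 27*m^3) + 4*(L1*L2)^3)
      (2*(S^3 + 27*m^3)*(9*S^2*m) + (27*S*m^2)^2 + (-2*(L1^3 + L2^3))*(9*S^2*m))
      (2*(S^3 + 27*m^3)*(27*S*m^2) + (9*S^2*m)^2 + (-2*(L1^3 + L2^3))*(27*S*m^2))"
    unfolding g_def by (rule prod_over_cube_roots, rule norm_pair_expansion)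
  also have "\<dots> = psi u v z m"
    unfolding psi_def Let_def p r s1_s2_def L1_L2_S_def(3) ..
  finally have circulant: "g 1 * g w * g (w^2) = psi u v z m" .
  have "sextic u v z m * sextic z u v m * sextic v z u m * sextic v u z m * sextic u z v m * sextic z v u m
      = (((t*L1 - S)^3 - 27*m^3) * ((t*w*L1 - S)^3 - 27*m^3) * ((t*w^2*L1 - S)^3 - 27*m^3))
        * (((t*L2 - S)^3 - 27*m^3) * ((t*w*L2 - S)^3 - 27*m^3) * ((t*w^2*L2 - S)^3 - 27*m^3))"
    unfolding sextic_permutations[where u=u and v=v and z=z and m=m] L1_L2_S_def by (simp only: mult_ac)
  also have "\<dots> = g 1 * g w * g (w^2)"
    unfolding norm_shifted_cube_difference g_def by (simp add: mult_ac)
  finally show ?thesis unfolding circulant .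
qed

end

section \<open>The ring \<open>\<int>[\<theta>, \<omega>]\<close>\<close>

text \<open>\<open>ZS a\<^sub>0 a\<^sub>1 a\<^sub>2 b\<^sub>0 b\<^sub>1 b\<^sub>2\<close> stands for \<open>(a\<^sub>0 + a\<^sub>1\<theta> + a\<^sub>2\<theta>\<^sup>2) + \<omega>(b\<^sub>0 + b\<^sub>1\<theta> + b\<^sub>2\<theta>\<^sup>2)\<close>, where
  \<open>\<theta>\<^sup>3 = 2\<close> and \<open>\<omega>\<^sup>2 + \<omega> + 1 = 0\<close>; \<open>zs_eval t w\<close> evaluates at \<open>\<theta> := t\<close>, \<open>\<omega> := w\<close>.\<close>
datatype zsplit = ZS int int int int int int

fun cbrt2_mult :: "int \<times> int \<times> int \<Rightarrow> int \<times> int \<times> int \<Rightarrow> int \<times> int \<times> int" where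
  "cbrt2_mult (a, b, c) (d, e, f) = (a*d + 2*(b*f + c*e), a*e + b*d + 2*c*f, a*f + b*e + c*d)"

fun cbrt2_eval :: "'a::comm_ring_1 \<Rightarrow> int \<times> int \<times> int \<Rightarrow> 'a" where
  "cbrt2_eval t (a, b, c) = of_int a + of_int b * t + of_int c * t^2"

fun zs_eval :: "'a::comm_ring_1 \<Rightarrow> 'a \<Rightarrow> zsplit \<Rightarrow> 'a" where
  "zs_eval t w (ZS a0 a1 a2 b0 b1 b2) = cbrt2_eval t (a0, a1, a2) + w * cbrt2_eval t (b0, b1, b2)"

lemma cbrt2_eval_mult:
  "\<exists>P. cbrt2_eval t x * cbrt2_eval t y = cbrt2_eval t (cbrt2_mult x y) + (t^3 - 2) * P"
proof -
  obtain a b c d e f where xy: "x = (a, b, c)" "y = (d, e, f)" by (metis prod_cases3)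
  have "cbrt2_eval t x * cbrt2_eval t y
      = cbrt2_eval t (cbrt2_mult x y) + (t^3 - 2) * (of_int (b*f + c*e) + of_int (c*f) * t)"
    unfolding xy by (simp add: algebra_simps power2_eq_square power3_eq_cube)
  then show ?thesis ..
qed

lemma cbrt2_eval_add: "cbrt2_eval t (a + d, b + e, c + f) = cbrt2_eval t (a, b, c) + cbrt2_eval t (d, e, f)"
  by (simp add: algebra_simps)

lemma cbrt2_eval_diff: "cbrt2_eval t (a - d, b - e, c - f) = cbrt2_eval t (a, b, c) - cbrt2_eval t (d, e, f)"
  by (simp add: algebra_simps)

definition \<omega> :: complex where "\<omega> = Complex (-1/2) (sqrt 3 / 2)"

definition \<theta> :: complex where "\<theta> = of_real (root 3 2)"

lemma omega_min_poly: "\<omega>^2 + \<omega> + 1 = 0"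
  by (simp add: \<omega>_def complex_eq_iff power2_eq_square)

lemma theta_cube: "\<theta>^3 = 2"
  by (simp add: \<theta>_def flip: of_real_power)

lemma cbrt2_norm_eq_zero_imp_zero:
  fixes a b c :: int
  assumes "a^3 + 2*b^3 + 4*c^3 = 6*a*b*c"
  shows "a = 0 \<and> b = 0 \<and> c = 0"
  using assms
proof (induction "nat (\<bar>a\<bar> + \<bar>b\<bar> + \<bar>c\<bar>)" arbitrary: a b c rule: less_induct)
  case less
  have "a^3 = 2*(3*a*b*c - b^3 - 2*c^3)" using less.prems by (simp add: algebra_simps)
  then obtain d where d: "a = 2*d" by (metis dvd_triv_left even_power evenE)
  have "b^3 = 2*(3*d*b*c - 2*d^3 - c^3)" using less.prems unfolding d by (simp add: algebra_simps power3_eq_cube)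
  then obtain e where e: "b = 2*e" by (metis dvd_triv_left even_power evenE)
  have "c^3 = 2*(3*d*e*c - d^3 - 2*e^3)" using less.prems unfolding d e by (simp add: algebra_simps power3_eq_cube)
  then obtain f where f: "c = 2*f" by (metis dvd_triv_left even_power evenE)
  have halved: "d^3 + 2*e^3 + 4*f^3 = 6*d*e*f"
    using less.prems unfolding d e f by (simp add: algebra_simps power3_eq_cube)
  show ?case
  proof (cases "a = 0 \<and> b = 0 \<and> c = 0")
    case False
    then have "nat (\<bar>d\<bar> + \<bar>e\<bar> + \<bar>f\<bar>) < nat (\<bar>a\<bar> + \<bar>b\<bar> + \<bar>c\<bar>)" unfolding d e f by auto
    from less.hyps[OF this halved] show ?thesis unfolding d e f by simp
  qed
qed

lemma cbrt2_eval_eq_0_imp_zero: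
  assumes "cbrt2_eval (root 3 2 :: real) (a, b, c) = 0"
  shows "a = 0 \<and> b = 0 \<and> c = 0"
proof -
  define r where "r = root 3 (2::real)"
  have r3: "r^3 = 2" by (simp add: r_def)
  define A B C where "A = real_of_int a" "B = real_of_int b" "C = real_of_int c"
  have "A + B * r + C * r^2 = 0" using assms by (simp add: r_def A_B_C_def)
  \<comment> \<open>multiply by the cofactor of the norm form\<close>
  moreover have "(A + B*r + C*r^2) * ((A^2 - 2*B*C) + (2*C^2 - A*B) * r + (B^2 - A*C) * r^2)
     = A^3 + 2*B^3 + 4*C^3 - 6*A*B*C + (r^3 - 2) * ((B^3 + 2*C^3 - 2*A*B*C) + (B^2*C - A*C^2) * r)"
    by (simp add: algebra_simps power2_eq_square power3_eq_cube)
  ultimately have "real_of_int (a^3 + 2*b^3 + 4*c^3 - 6*a*b*c) = 0"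
    using r3 by (simp add: A_B_C_def)
  then have "a^3 + 2*b^3 + 4*c^3 = 6*a*b*c" by (simp only: of_int_eq_0_iff)
  then show ?thesis by (rule cbrt2_norm_eq_zero_imp_zero)
qed

lemma zs_eval_complex_eq_0_imp_zero:
  assumes "zs_eval \<theta> \<omega> x = 0"
  shows "x = ZS 0 0 0 0 0 0"
proof -
  obtain a0 a1 a2 b0 b1 b2 where x: "x = ZS a0 a1 a2 b0 b1 b2" by (cases x)
  define p q where "p = cbrt2_eval (root 3 2 :: real) (a0, a1, a2)" "q = cbrt2_eval (root 3 2 :: real) (b0, b1, b2)"
  have "zs_eval \<theta> \<omega> x = complex_of_real p + \<omega> * complex_of_real q"
    by (simp add: x p_q_def \<theta>_def)
  then have "Im (complex_of_real p + \<omega> * complex_of_real q) = 0" "Re (complex_of_real p + \<omega> * complex_of_real q) = 0"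
    using assms by simp_all
  then have "q = 0" "p = 0" by (simp_all add: \<omega>_def)
  then show ?thesis
    using cbrt2_eval_eq_0_imp_zero unfolding x p_q_def by blast
qed

instantiation zsplit :: comm_ring_1
begin

definition zero_zsplit where "0 = ZS 0 0 0 0 0 0"
definition one_zsplit where "1 = ZS 1 0 0 0 0 0"
fun plus_zsplit where
  "ZS a0 a1 a2 b0 b1 b2 + ZS c0 c1 c2 d0 d1 d2 = ZS (a0+c0) (a1+c1) (a2+c2) (b0+d0) (b1+d1) (b2+d2)"
fun uminus_zsplit where
  "- ZS a0 a1 a2 b0 b1 b2 = ZS (-a0) (-a1) (-a2) (-b0) (-b1) (-b2)"
definition minus_zsplit where "x - y = x + (- y :: zsplit)"
fun times_zsplit where
  "ZS a0 a1 a2 b0 b1 b2 * ZS c0 c1 c2 d0 d1 d2 =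
    (case (cbrt2_mult (a0,a1,a2) (c0,c1,c2), cbrt2_mult (b0,b1,b2) (d0,d1,d2),
           cbrt2_mult (a0,a1,a2) (d0,d1,d2), cbrt2_mult (b0,b1,b2) (c0,c1,c2)) of
      ((x0,x1,x2), (y0,y1,y2), (u0,u1,u2), (v0,v1,v2)) \<Rightarrow>
        ZS (x0-y0) (x1-y1) (x2-y2) (u0+v0-y0) (u1+v1-y1) (u2+v2-y2))"

lemma zs_eval_add: "zs_eval t w (x + y) = zs_eval t w x + zs_eval t w y"
  by (cases x; cases y) (simp add: algebra_simps)

lemma zs_eval_uminus: "zs_eval t w (- x) = - zs_eval t w x"
  by (cases x) (simp add: algebra_simps)

text \<open>Stated with error terms so that it serves both where the relations \<open>t\<^sup>3 = 2\<close>, \<open>w\<^sup>2 + w + 1 = 0\<close> hold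
  and modulo 31 at \<open>(t, w) = (4, 5)\<close>.\<close>
lemma zs_eval_mult:
  "\<exists>P Q. zs_eval t w x * zs_eval t w y = zs_eval t w (x * y) + (t^3 - 2) * P + (w^2 + w + 1) * Q"
proof -
  obtain a0 a1 a2 b0 b1 b2 where x: "x = ZS a0 a1 a2 b0 b1 b2" by (cases x)
  obtain c0 c1 c2 d0 d1 d2 where y: "y = ZS c0 c1 c2 d0 d1 d2" by (cases y)
  define A B C D where "A = (a0, a1, a2)" "B = (b0, b1, b2)" "C = (c0, c1, c2)" "D = (d0, d1, d2)"
  obtain x0 x1 x2 y0 y1 y2 u0 u1 u2 v0 v1 v2 where prods:
    "cbrt2_mult A C = (x0, x1, x2)" "cbrt2_mult B D = (y0, y1, y2)"
    "cbrt2_mult A D = (u0, u1, u2)" "cbrt2_mult B C = (v0, v1, v2)"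
    by (metis prod_cases3)
  obtain P1 P2 P3 P4 where defects:
    "cbrt2_eval t A * cbrt2_eval t C = cbrt2_eval t (x0, x1, x2) + (t^3 - 2) * P1"
    "cbrt2_eval t B * cbrt2_eval t D = cbrt2_eval t (y0, y1, y2) + (t^3 - 2) * P2"
    "cbrt2_eval t A * cbrt2_eval t D = cbrt2_eval t (u0, u1, u2) + (t^3 - 2) * P3"
    "cbrt2_eval t B * cbrt2_eval t C = cbrt2_eval t (v0, v1, v2) + (t^3 - 2) * P4"
    using cbrt2_eval_mult prods by metis
  have "zs_eval t w (x * y) = cbrt2_eval t (x0, x1, x2) - cbrt2_eval t (y0, y1, y2)
      + w * (cbrt2_eval t (u0, u1, u2) + cbrt2_eval t (v0, v1, v2) - cbrt2_eval t (y0, y1, y2))"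
    unfolding x y by (simp only: times_zsplit.simps A_B_C_D_def[symmetric] prods prod.case
        zs_eval.simps cbrt2_eval_add cbrt2_eval_diff)
  moreover have "zs_eval t w x * zs_eval t w y = cbrt2_eval t A * cbrt2_eval t C
      + w * (cbrt2_eval t A * cbrt2_eval t D + cbrt2_eval t B * cbrt2_eval t C)
      + w^2 * (cbrt2_eval t B * cbrt2_eval t D)"
    unfolding x y A_B_C_D_def zs_eval.simps by (simp only: power2_eq_square algebra_simps)
  ultimately have "zs_eval t w x * zs_eval t w y = zs_eval t w (x * y)
      + (t^3 - 2) * (P1 - P2 + w * (P3 + P4 - P2)) + (w^2 + w + 1) * (cbrt2_eval t B * cbrt2_eval t D)"
    unfolding defects by (simp add: algebra_simps power2_eq_square del: cbrt2_eval.simps)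
  then show ?thesis by blast
qed

lemma zs_eval_zero: "zs_eval t w 0 = 0"
  by (simp add: zero_zsplit_def)

lemma zs_eval_one: "zs_eval t w 1 = 1"
  by (simp add: one_zsplit_def)

lemma zs_eval_complex_mult: "zs_eval \<theta> \<omega> (x * y) = zs_eval \<theta> \<omega> x * zs_eval \<theta> \<omega> y"
  using zs_eval_mult[of \<theta> \<omega> x y] by (auto simp: theta_cube omega_min_poly)

lemma zs_eval_complex_inj: "zs_eval \<theta> \<omega> x = zs_eval \<theta> \<omega> y \<Longrightarrow> x = y"
proof -
  assume "zs_eval \<theta> \<omega> x = zs_eval \<theta> \<omega> y"
  then have "zs_eval \<theta> \<omega> (x + - y) = 0" by (simp only: zs_eval_add zs_eval_uminus) simp
  then have "x + - y = ZS 0 0 0 0 0 0" by (rule zs_eval_complex_eq_0_imp_zero)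
  then show "x = y" by (cases x; cases y) auto
qed

text \<open>The ring axioms are transferred from \<open>\<complex>\<close> along the injective map \<open>zs_eval \<theta> \<omega>\<close>.\<close>
instance
proof
  show "(0::zsplit) \<noteq> 1" by (simp add: zero_zsplit_def one_zsplit_def)
qed (auto intro!: zs_eval_complex_inj simp: zs_eval_add zs_eval_uminus zs_eval_complex_mult
      zs_eval_zero zs_eval_one minus_zsplit_def algebra_simps simp del: zs_eval.simps)

end

lemma zs_eval_diff: "zs_eval t w (x - y) = zs_eval t w x - zs_eval t w y"
  by (simp only: diff_conv_add_uminus zs_eval_add zs_eval_uminus)

definition zomega :: zsplit where "zomega = ZS 0 0 0 1 0 0"

definition ztheta :: zsplit where "ztheta = ZS 0 1 0 0 0 0"

lemma zs_eval_zomega: "zs_eval t w zomega = w"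
  by (simp add: zomega_def)

lemma zs_eval_ztheta: "zs_eval t w ztheta = t"
  by (simp add: ztheta_def)

context cube_roots
begin

lemma zs_eval_hom_mult: "zs_eval t w (x * y) = zs_eval t w x * zs_eval t w y"
  using zs_eval_mult[of t w x y] by (auto simp: t_cube w_quadratic)

lemma zs_eval_power: "zs_eval t w (x ^ n) = zs_eval t w x ^ n"
  by (induction n) (simp_all add: zs_eval_one zs_eval_hom_mult del: zs_eval.simps)

lemmas zs_eval_simps = zs_eval_add zs_eval_uminus zs_eval_diff zs_eval_hom_mult zs_eval_power
  zs_eval_zero zs_eval_one zs_eval_zomega zs_eval_ztheta

lemma zs_eval_dot3: "zs_eval t w (dot3 u v) = dot3 (map3 (zs_eval t w) u) (map3 (zs_eval t w) v)"
  by (cases u; cases v) (simp add: zs_eval_add zs_eval_hom_mult del: zs_eval.simps)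

lemma zs_eval_cross3: "map3 (zs_eval t w) (cross3 u v) = cross3 (map3 (zs_eval t w) u) (map3 (zs_eval t w) v)"
  by (cases u; cases v) (simp add: zs_eval_diff zs_eval_hom_mult del: zs_eval.simps)

end

interpretation complex_roots: cube_roots \<omega> \<theta>
  by standard (simp_all add: omega_min_poly theta_cube)

abbreviation embed3 :: "zsplit \<times> zsplit \<times> zsplit \<Rightarrow> vec3" where
  "embed3 \<equiv> map3 (zs_eval \<theta> \<omega>)"

lemma zs_eval_complex_eq_0_iff: "zs_eval \<theta> \<omega> x = 0 \<longleftrightarrow> x = 0"
  using zs_eval_complex_inj[of x 0] by (auto simp: zs_eval_zero)

lemma embed3_eq_0_iff: "embed3 v = 0 \<longleftrightarrow> v = 0"
  by (cases v) (simp add: zero_prod_def zs_eval_complex_eq_0_iff del: zs_eval.simps)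

lemma dot3_embed3_eq_0_iff: "dot3 (embed3 u) (embed3 v) = 0 \<longleftrightarrow> dot3 u v = 0"
  by (simp flip: complex_roots.zs_eval_dot3 add: zs_eval_complex_eq_0_iff del: zs_eval.simps)

lemma cross3_embed3_eq_0_iff: "cross3 (embed3 u) (embed3 v) = 0 \<longleftrightarrow> cross3 u v = 0"
  by (simp flip: complex_roots.zs_eval_cross3 add: embed3_eq_0_iff del: zs_eval.simps map3.simps)

text \<open>Since \<open>4\<^sup>3 \<equiv> 2\<close> and \<open>5\<^sup>2 + 5 + 1 \<equiv> 0 (mod 31)\<close>, \<open>\<theta> \<mapsto> 4, \<omega> \<mapsto> 5\<close> is a ring map \<open>\<int>[\<theta>, \<omega>] \<rightarrow> \<int>/31\<close>.\<close>
definition red31 :: "zsplit \<Rightarrow> int" where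
  "red31 x = zs_eval 4 5 x mod 31"

definition dot31 :: "int \<times> int \<times> int \<Rightarrow> int \<times> int \<times> int \<Rightarrow> int" where
  "dot31 u v = dot3 u v mod 31"

definition cross31 :: "int \<times> int \<times> int \<Rightarrow> int \<times> int \<times> int \<Rightarrow> int \<times> int \<times> int" where
  "cross31 u v = map3 (\<lambda>n. n mod 31) (cross3 u v)"

lemma red31_zero: "red31 0 = 0"
  by (simp add: red31_def zs_eval_zero)

lemma red31_add: "red31 (x + y) = (red31 x + red31 y) mod 31"
  by (simp add: red31_def zs_eval_add mod_add_eq del: zs_eval.simps)

lemma red31_diff: "red31 (x - y) = (red31 x - red31 y) mod 31"
  by (simp add: red31_def zs_eval_diff mod_diff_eq del: zs_eval.simps)

lemma red31_mult: "red31 (x * y) = (red31 x * red31 y) mod 31"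
proof -
  obtain P Q where "zs_eval 4 5 x * zs_eval 4 5 y = zs_eval 4 5 (x * y) + (4^3 - 2) * P + (5^2 + 5 + 1) * (Q::int)"
    using zs_eval_mult by blast
  then have "zs_eval 4 5 (x * y) = zs_eval 4 5 x * zs_eval 4 5 y + (- 2*P - Q) * 31"
    by (simp add: algebra_simps)
  then show ?thesis by (simp only: red31_def mod_mult_self1 mod_mult_eq)
qed

lemma red31_dot3: "red31 (dot3 u v) = dot31 (map3 red31 u) (map3 red31 v)"
  by (cases u; cases v) (simp add: dot31_def red31_add red31_mult mod_simps)

lemma red31_cross3: "map3 red31 (cross3 u v) = cross31 (map3 red31 u) (map3 red31 v)"
  by (cases u; cases v) (simp add: cross31_def red31_diff red31_mult mod_simps)

lemma dot31_eq_0_if_dot3_eq_0: "dot3 u v = 0 \<Longrightarrow> dot31 (map3 red31 u) (map3 red31 v) = 0"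
  by (simp flip: red31_dot3 add: red31_zero)

lemma cross3_neq_0_if_cross31_neq_0:
  "cross31 (map3 red31 u) (map3 red31 v) \<noteq> 0 \<Longrightarrow> cross3 u v \<noteq> 0"
  by (auto simp flip: red31_cross3 simp: zero_prod_def red31_zero)

section \<open>The configuration of sextactic points and lines\<close>

definition base_pts :: "(zsplit \<times> zsplit \<times> zsplit) list" where
  "base_pts = [(1, zomega^a, - ztheta * zomega^b). a \<leftarrow> [0..<3], b \<leftarrow> [0..<3]]"

definition config_pts :: "(zsplit \<times> zsplit \<times> zsplit) list" where
  "config_pts = concat (map (\<lambda>k. map (permute3 k) base_pts) [0..<3])"

definition cubic_lines :: "(zsplit \<times> zsplit \<times> zsplit) list" where
  "cubic_lines = [(1, - (zomega^i), 0). i \<leftarrow> [0,1,2]]"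

definition cbrt2_lines :: "(zsplit \<times> zsplit \<times> zsplit) list" where
  "cbrt2_lines = [(ztheta * zomega^k, 0, 1). k \<leftarrow> [0,1,2]]"

definition grid_lines :: "(zsplit \<times> zsplit \<times> zsplit) list" where
  "grid_lines = [((1 + ztheta) * zomega^i, (ztheta^2 * zomega - 1) * zomega^j, 1 + ztheta * zomega).
     i \<leftarrow> [0,1,2], j \<leftarrow> [0,1,2]]"

definition config_lines :: "(zsplit \<times> zsplit \<times> zsplit) list" where
  "config_lines = concat (map (\<lambda>k. map (permute3 k) cubic_lines) [0..<3])
     @ concat (map (\<lambda>k. map (permute3 k) cbrt2_lines) [0..<6])
     @ concat (map (\<lambda>k. map (permute3 k) grid_lines) [0..<6])"

definition config_pts31 :: "(int \<times> int \<times> int) list" where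
  "config_pts31 = map (map3 red31) config_pts"

definition config_lines31 :: "(int \<times> int \<times> int) list" where
  "config_lines31 = map (map3 red31) config_lines"

definition line_pts31 :: "(int \<times> int \<times> int) list list" where
  "line_pts31 = map (\<lambda>l. filter (\<lambda>p. dot31 l p = 0) config_pts31) config_lines31"

text \<open>By the second fact each configuration line meets exactly three of the
  points modulo 31, and meets these exactly. In the third, \<open>C\<close> collects the points on configuration
  lines through \<open>p\<close>: for every pair \<open>p, q\<close> either a configuration line contains both, or no third
  point lies on the line \<open>pq\<close> modulo 31.\<close>

lemma config_pts31_check:
  "length config_pts31 = 27 \<and> distinct config_pts31 \<and> sorted_wrt (\<lambda>p q. cross31 p q \<noteq> 0) config_pts31"
  by code_simp

lemma line_pts31_check:
  "distinct line_pts31 \<and> list_all (\<lambda>(L, S). length S = 3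
     \<and> list_all (\<lambda>(P, p). p \<in> set S \<longrightarrow> dot3 L P = 0) (zip config_pts config_pts31)) (zip config_lines line_pts31)"
  by code_simp

lemma collinear_pairs_check:
  "list_all (\<lambda>p. let C = concat (filter (\<lambda>S. p \<in> set S) line_pts31) in
     list_all (\<lambda>q. q \<in> set C \<or> (let c = cross31 p q in
       list_all (\<lambda>r. dot31 c r = 0 \<longrightarrow> r = p \<or> r = q) config_pts31)) config_pts31) config_pts31"
  by code_simp

definition pts31_on :: "zsplit \<times> zsplit \<times> zsplit \<Rightarrow> (int \<times> int \<times> int) list" where
  "pts31_on L = filter (\<lambda>p. dot31 (map3 red31 L) p = 0) config_pts31"

lemma line_pts31_eq: "line_pts31 = map pts31_on config_lines"
  by (simp add: line_pts31_def config_lines31_def pts31_on_def)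

lemma set_zip_map: "set (zip xs (map f xs)) = (\<lambda>x. (x, f x)) ` set xs"
  by (induction xs) auto

lemma sorted_wrt_mem_imp: "sorted_wrt R xs \<Longrightarrow> x \<in> set xs \<Longrightarrow> y \<in> set xs \<Longrightarrow> x \<noteq> y \<Longrightarrow> R x y \<or> R y x"
  by (induction xs) auto

lemma red31_inj_on_config_pts: "inj_on (map3 red31) (set config_pts)"
  using config_pts31_check by (simp add: config_pts31_def distinct_map)

lemma distinct_config_lines: "distinct config_lines"
  using line_pts31_check by (simp add: line_pts31_eq distinct_map)

lemma pts31_on_length: "L \<in> set config_lines \<Longrightarrow> length (pts31_on L) = 3"
  using line_pts31_check by (auto simp: line_pts31_eq list_all_iff set_zip_map)

lemma dot3_eq_0_iff_mem_pts31_on: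
  assumes "L \<in> set config_lines" "P \<in> set config_pts"
  shows "dot3 L P = 0 \<longleftrightarrow> map3 red31 P \<in> set (pts31_on L)"
proof
  assume "dot3 L P = 0"
  then show "map3 red31 P \<in> set (pts31_on L)"
    using assms(2) dot31_eq_0_if_dot3_eq_0 by (auto simp: pts31_on_def config_pts31_def)
next
  assume "map3 red31 P \<in> set (pts31_on L)"
  then show "dot3 L P = 0"
    using line_pts31_check assms by (auto simp: line_pts31_eq list_all_iff set_zip_map config_pts31_def)
qed

lemma collinear_imp_common_line:
  assumes P: "P \<in> set config_pts" and Q: "Q \<in> set config_pts" and R: "R \<in> set config_pts"
    and distinct: "R \<noteq> P" "R \<noteq> Q" and collinear: "dot3 (cross3 P Q) R = 0"
  shows "\<exists>L \<in> set config_lines. dot3 L P = 0 \<and> dot3 L Q = 0"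
proof -
  define p q r where "p = map3 red31 P" "q = map3 red31 Q" "r = map3 red31 R"
  have mem: "p \<in> set config_pts31" "q \<in> set config_pts31" "r \<in> set config_pts31"
    using P Q R by (simp_all add: p_q_r_def config_pts31_def)
  have "r \<noteq> p" "r \<noteq> q"
    using distinct P Q R red31_inj_on_config_pts by (auto simp: p_q_r_def dest: inj_onD)
  moreover have "dot31 (cross31 p q) r = 0"
    using dot31_eq_0_if_dot3_eq_0[OF collinear] by (simp add: p_q_r_def red31_cross3)
  ultimately have "\<exists>S \<in> set line_pts31. p \<in> set S \<and> q \<in> set S"
    using collinear_pairs_check mem by (fastforce simp: list_all_iff Let_def)
  then obtain L where "L \<in> set config_lines" "p \<in> set (pts31_on L)" "q \<in> set (pts31_on L)"
    by (auto simp: line_pts31_eq)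
  then show ?thesis
    using dot3_eq_0_iff_mem_pts31_on P Q by (auto simp: p_q_r_def)
qed

section \<open>Lines through sextactic points\<close>

lemma nonzero3_iff: "nonzero3 v \<longleftrightarrow> v \<noteq> 0"
  by (simp add: nonzero3_def zero_prod_def)

lemma mem_line_of: "v \<in> line_of a \<longleftrightarrow> v \<noteq> 0 \<and> dot3 a v = 0"
  by (cases a; cases v) (simp add: line_of_def nonzero3_iff)

lemma line_of_scale3: "c \<noteq> 0 \<Longrightarrow> line_of (scale3 c a) = line_of a"
  by (auto simp: mem_line_of dot3_scale3_left)

lemma line_of_eq_imp_scale3:
  assumes "line_of a = line_of b" and "a \<noteq> 0" and "b \<noteq> 0"
  shows "\<exists>c. c \<noteq> 0 \<and> a = scale3 c b"
proof -
  obtain b1 b2 b3 where b: "b = (b1, b2, b3)" by (metis prod_cases3)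
  have orth: "dot3 a p = 0" if "dot3 b p = 0" for p
  proof (cases "p = 0")
    case True
    then show ?thesis by (cases a) (simp add: zero_prod_def)
  next
    case False
    then show ?thesis using that assms(1) by (auto simp: mem_line_of)
  qed
  from orth[of "(0, - b3, b2)"] orth[of "(b3, 0, - b1)"] orth[of "(- b2, b1, 0)"]
  have "cross3 a b = 0" by (cases a) (simp add: b zero_prod_def algebra_simps)
  then obtain c where c: "a = scale3 c b" using assms(3) cross3_eq_0_imp_scale3 by blast
  moreover have "c \<noteq> 0" using assms(2) by (auto simp: c b zero_prod_def)
  ultimately show ?thesis by blast
qed

lemma same_point_imp_cross3_eq_0: "same_point u v \<Longrightarrow> cross3 u v = 0"
  by (cases u; cases v) (auto simp: same_point_def zero_prod_def)

lemma same_point_scale3: "s \<noteq> 0 \<Longrightarrow> s' \<noteq> 0 \<Longrightarrow> same_point (scale3 s v) (scale3 s' v)"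
  by (cases v) (auto simp: same_point_def intro!: exI[of _ "s/s'"])

lemma mem_config_pts: "P \<in> set config_pts \<longleftrightarrow> (\<exists>k<3. \<exists>a<3. \<exists>b<3. P = permute3 k (1, zomega^a, - ztheta * zomega^b))"
  unfolding config_pts_def base_pts_def set_concat set_map set_upt image_image atLeast0LessThan lessThan_iff
  by blast

lemma embed3_config_pt_form:
  "k < 3 \<Longrightarrow> embed3 (permute3 k (1, zomega^a, - ztheta * zomega^b)) = permute3 k (1, \<omega>^a, - \<theta> * \<omega>^b)"
  by (simp add: map3_permute3 complex_roots.zs_eval_simps del: zs_eval.simps)

lemma sextactic_permute3:
  assumes "k < 3"
  shows "sextactic (permute3 k v) \<longleftrightarrow> sextactic v"
proof -
  obtain x y z where v: "v = (x, y, z)" by (metis prod_cases3)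
  from assms consider "k = 0" | "k = 1" | "k = 2" by linarith
  then show ?thesis by cases (simp_all add: v permute3_def sextactic_def nonzero3_def ac_simps)
qed

lemma omega_power_cube: "(\<omega>^a)^3 = 1"
  by (metis complex_roots.w_cube mult.commute power_mult power_one)

lemma sextactic_embed3_config_pts:
  assumes "P \<in> set config_pts"
  shows "sextactic (embed3 P)"
proof -
  obtain k a b where k: "k < 3" and P: "P = permute3 k (1, zomega^a, - ztheta * zomega^b)"
    using assms mem_config_pts by blast
  have "sextactic (1, \<omega>^a, - \<theta> * \<omega>^b)"
    by (simp add: sextactic_def nonzero3_def power_mult_distrib theta_cube omega_power_cube)
  then show ?thesis unfolding P embed3_config_pt_form[OF k] sextactic_permute3[OF k] .
qed

lemma equal_cubes_imp_omega_multiple: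
  assumes "y^3 = x^3"
  shows "\<exists>a<3. y = \<omega>^a * x"
proof -
  have "(y - x) * (y - \<omega>*x) * (y - \<omega>^2*x) = 0"
    using complex_roots.diff_cubes_factor assms by simp
  then have "\<exists>a \<in> {0, 1, 2}. y = \<omega>^a * x" by auto
  then show ?thesis by force
qed

lemma sextactic_normal_form:
  assumes "x^3 = y^3" and "x^3 + y^3 + z^3 = 0" and "(x, y, z) \<noteq> 0"
  shows "\<exists>a<3. \<exists>b<3. x \<noteq> 0 \<and> (x, y, z) = scale3 x (1, \<omega>^a, - \<theta> * \<omega>^b)"
proof -
  have "z^3 = (- \<theta> * x)^3"
    using assms(1,2) by (simp add: power_mult_distrib theta_cube algebra_simps eq_neg_iff_add_eq_0)
  then obtain b where b: "b < 3" "z = \<omega>^b * (- \<theta> * x)" using equal_cubes_imp_omega_multiple by blast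
  obtain a where a: "a < 3" "y = \<omega>^a * x" using equal_cubes_imp_omega_multiple assms(1) by metis
  have "x \<noteq> 0" using assms(3) a b by (auto simp: zero_prod_def)
  moreover have "(x, y, z) = scale3 x (1, \<omega>^a, - \<theta> * \<omega>^b)" using a b by (simp add: algebra_simps)
  ultimately show ?thesis using a(1) b(1) by blast
qed

lemma sextactic_imp_multiple_of_config_pt:
  assumes "sextactic v"
  shows "\<exists>P \<in> set config_pts. \<exists>s. s \<noteq> 0 \<and> v = scale3 s (embed3 P)"
proof -
  obtain x y z where v: "v = (x, y, z)" by (metis prod_cases3)
  have cubes: "x^3 + y^3 + z^3 = 0" and "x^3 = y^3 \<or> y^3 = z^3 \<or> z^3 = x^3"
    using assms by (auto simp: v sextactic_def)
  have nz: "(x, y, z) \<noteq> 0" "(y, z, x) \<noteq> 0" "(z, x, y) \<noteq> 0"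
    using assms by (auto simp: v sextactic_def nonzero3_def zero_prod_def)
  have "\<exists>k<3. \<exists>a<3. \<exists>b<3. \<exists>s. s \<noteq> 0 \<and> v = scale3 s (permute3 k (1, \<omega>^a, - \<theta> * \<omega>^b))"
  proof -
    consider "x^3 = y^3" | "y^3 = z^3" | "z^3 = x^3" using \<open>x^3 = y^3 \<or> _\<close> by blast
    then show ?thesis
    proof cases
      case 1
      then obtain a b where "a < 3" "b < 3" "x \<noteq> 0" "(x, y, z) = scale3 x (1, \<omega>^a, - \<theta> * \<omega>^b)"
        using sextactic_normal_form cubes nz(1) by blast
      moreover have "permute3 0 c = c" for c :: vec3 by (cases c) (simp add: permute3_def)
      ultimately show ?thesis unfolding v by (intro exI[of _ "0::nat"]) auto
    next
      case 2
      moreover have "y^3 + z^3 + x^3 = 0" using cubes by (simp add: ac_simps)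
      ultimately obtain a b where "a < 3" "b < 3" "y \<noteq> 0" "(y, z, x) = scale3 y (1, \<omega>^a, - \<theta> * \<omega>^b)"
        using sextactic_normal_form nz(2) by blast
      moreover from this(4) have "(x, y, z) = scale3 y (permute3 2 (1, \<omega>^a, - \<theta> * \<omega>^b))"
        by (simp add: permute3_def)
      ultimately show ?thesis unfolding v by (intro exI[of _ "2::nat"]) auto
    next
      case 3
      moreover have "z^3 + x^3 + y^3 = 0" using cubes by (simp add: ac_simps)
      ultimately obtain a b where "a < 3" "b < 3" "z \<noteq> 0" "(z, x, y) = scale3 z (1, \<omega>^a, - \<theta> * \<omega>^b)"
        using sextactic_normal_form nz(3) by blast
      moreover from this(4) have "(x, y, z) = scale3 z (permute3 1 (1, \<omega>^a, - \<theta> * \<omega>^b))"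
        by (simp add: permute3_def)
      ultimately show ?thesis unfolding v by (intro exI[of _ "1::nat"]) auto
    qed
  qed
  then show ?thesis using mem_config_pts embed3_config_pt_form by metis
qed

lemma cross3_embed3_config_pts_neq_0:
  assumes "P \<in> set config_pts" "Q \<in> set config_pts" "P \<noteq> Q"
  shows "cross3 (embed3 P) (embed3 Q) \<noteq> 0"
proof -
  have "map3 red31 P \<noteq> map3 red31 Q" using assms red31_inj_on_config_pts by (auto dest: inj_onD)
  then have "cross31 (map3 red31 P) (map3 red31 Q) \<noteq> 0 \<or> cross31 (map3 red31 Q) (map3 red31 P) \<noteq> 0"
    using config_pts31_check sorted_wrt_mem_imp assms(1,2) unfolding config_pts31_def by fastforce
  then have "cross3 P Q \<noteq> 0 \<or> cross3 Q P \<noteq> 0" using cross3_neq_0_if_cross31_neq_0 by blast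
  then show ?thesis by (auto simp: cross3_embed3_eq_0_iff cross3_anticomm[of Q P])
qed

lemma embed3_config_line_neq_0: "L \<in> set config_lines \<Longrightarrow> embed3 L \<noteq> 0"
proof
  assume "L \<in> set config_lines" "embed3 L = 0"
  then have "L = 0" using embed3_eq_0_iff by blast
  then have "map3 red31 L = 0" by (simp add: zero_prod_def red31_zero)
  moreover have "dot3 0 v = 0" for v :: "int \<times> int \<times> int" by (cases v) (simp add: zero_prod_def)
  ultimately have "pts31_on L = config_pts31" by (simp add: pts31_on_def dot31_def)
  then show False using pts31_on_length[OF \<open>L \<in> set config_lines\<close>] config_pts31_check by simp
qed

lemma embed3_mem_line_of_iff:
  assumes "L \<in> set config_lines" "P \<in> set config_pts"
  shows "embed3 P \<in> line_of (embed3 L) \<longleftrightarrow> map3 red31 P \<in> set (pts31_on L)"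
proof -
  have "embed3 P \<noteq> 0" using sextactic_embed3_config_pts[OF assms(2)] by (simp add: sextactic_def nonzero3_iff split: prod.splits)
  then show ?thesis
    by (simp add: mem_line_of dot3_embed3_eq_0_iff dot3_eq_0_iff_mem_pts31_on[OF assms])
qed

lemma line_of_config_line_in_sextactic_lines:
  assumes L: "L \<in> set config_lines"
  shows "line_of (embed3 L) \<in> sextactic_lines"
proof -
  have "distinct (pts31_on L)" using config_pts31_check by (simp add: pts31_on_def)
  moreover have "length (pts31_on L) = 3" using pts31_on_length[OF L] .
  ultimately obtain p q r where pqr: "pts31_on L = [p, q, r]" "p \<noteq> q" "q \<noteq> r" "p \<noteq> r"
    by (auto simp: numeral_3_eq_3 length_Suc_conv)
  have "set (pts31_on L) \<subseteq> map3 red31 ` set config_pts" by (auto simp: pts31_on_def config_pts31_def)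
  then have "p \<in> map3 red31 ` set config_pts" "q \<in> map3 red31 ` set config_pts" "r \<in> map3 red31 ` set config_pts"
    using pqr(1) by auto
  then obtain P Q R where PQR: "P \<in> set config_pts" "Q \<in> set config_pts" "R \<in> set config_pts"
    "p = map3 red31 P" "q = map3 red31 Q" "r = map3 red31 R"
    by blast
  have on: "embed3 P \<in> line_of (embed3 L)" "embed3 Q \<in> line_of (embed3 L)" "embed3 R \<in> line_of (embed3 L)"
    using embed3_mem_line_of_iff L PQR pqr(1) by simp_all
  have "P \<noteq> Q" "Q \<noteq> R" "P \<noteq> R" using pqr PQR by auto
  then have "\<not> same_point (embed3 P) (embed3 Q)" "\<not> same_point (embed3 Q) (embed3 R)"
    "\<not> same_point (embed3 P) (embed3 R)"
    using cross3_embed3_config_pts_neq_0 same_point_imp_cross3_eq_0 PQR by blast+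
  moreover have "is_line (line_of (embed3 L))"
    using embed3_config_line_neq_0[OF L] unfolding is_line_def nonzero3_iff by blast
  ultimately show ?thesis
    unfolding sextactic_lines_def using on PQR sextactic_embed3_config_pts by blast
qed

lemma line_through_config_pts:
  assumes "a \<noteq> 0" and P: "P \<in> set config_pts" and Q: "Q \<in> set config_pts" and R: "R \<in> set config_pts"
    and distinct: "P \<noteq> Q" "R \<noteq> P" "R \<noteq> Q"
    and on: "dot3 a (embed3 P) = 0" "dot3 a (embed3 Q) = 0" "dot3 a (embed3 R) = 0"
  shows "\<exists>L \<in> set config_lines. line_of a = line_of (embed3 L)"
proof -
  define n where "n = cross3 (embed3 P) (embed3 Q)"
  have n: "n \<noteq> 0" using cross3_embed3_config_pts_neq_0 P Q distinct(1) by (simp add: n_def)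
  obtain c where c: "a = scale3 c n" using orthogonal_imp_scale3_cross3[OF on(1,2)] n unfolding n_def by blast
  have "c \<noteq> 0" using assms(1) c by (cases n) (auto simp: zero_prod_def)
  then have "dot3 n (embed3 R) = 0" using on(3) by (simp add: c dot3_scale3_left)
  then have "dot3 (cross3 P Q) R = 0"
    by (simp add: n_def flip: complex_roots.zs_eval_cross3 dot3_embed3_eq_0_iff del: map3.simps)
  then obtain L where L: "L \<in> set config_lines" "dot3 L P = 0" "dot3 L Q = 0"
    using collinear_imp_common_line P Q R distinct(2,3) by blast
  then have "dot3 (embed3 L) (embed3 P) = 0" "dot3 (embed3 L) (embed3 Q) = 0"
    by (simp_all add: dot3_embed3_eq_0_iff)
  then obtain \<mu> where \<mu>: "embed3 L = scale3 \<mu> n"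
    using orthogonal_imp_scale3_cross3 n unfolding n_def by blast
  have "\<mu> \<noteq> 0" using embed3_config_line_neq_0[OF L(1)] \<mu> by (cases n) (auto simp: zero_prod_def)
  then have "a = scale3 (c / \<mu>) (embed3 L)" by (simp add: c \<mu> scale3_scale3)
  then show ?thesis using L(1) \<open>c \<noteq> 0\<close> \<open>\<mu> \<noteq> 0\<close> by (auto simp: line_of_scale3)
qed

lemma sextactic_line_eq_line_of_config_line:
  assumes "l \<in> sextactic_lines"
  shows "\<exists>L \<in> set config_lines. l = line_of (embed3 L)"
proof -
  obtain a p q r where a: "a \<noteq> 0" "l = line_of a"
    and on: "p \<in> l" "q \<in> l" "r \<in> l" and sx: "sextactic p" "sextactic q" "sextactic r"
    and distinct: "\<not> same_point p q" "\<not> same_point q r" "\<not> same_point p r"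
    using assms unfolding sextactic_lines_def is_line_def nonzero3_iff by blast
  obtain P s1 where P: "P \<in> set config_pts" "s1 \<noteq> 0" "p = scale3 s1 (embed3 P)"
    using sextactic_imp_multiple_of_config_pt[OF sx(1)] by blast
  obtain Q s2 where Q: "Q \<in> set config_pts" "s2 \<noteq> 0" "q = scale3 s2 (embed3 Q)"
    using sextactic_imp_multiple_of_config_pt[OF sx(2)] by blast
  obtain R s3 where R: "R \<in> set config_pts" "s3 \<noteq> 0" "r = scale3 s3 (embed3 R)"
    using sextactic_imp_multiple_of_config_pt[OF sx(3)] by blast
  have "P \<noteq> Q" "R \<noteq> P" "R \<noteq> Q" using distinct P Q R same_point_scale3 by blast+
  moreover have "dot3 a (embed3 P) = 0" "dot3 a (embed3 Q) = 0" "dot3 a (embed3 R) = 0"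
    using on P Q R a by (auto simp: mem_line_of dot3_scale3_right)
  ultimately show ?thesis using line_through_config_pts a P(1) Q(1) R(1) by metis
qed

lemma line_of_embed3_inj_on_config_lines: "inj_on (\<lambda>L. line_of (embed3 L)) (set config_lines)"
proof (rule inj_onI)
  fix L L' assume L: "L \<in> set config_lines" and L': "L' \<in> set config_lines"
    and eq: "line_of (embed3 L) = line_of (embed3 L')"
  have "map3 red31 P \<in> set (pts31_on L) \<longleftrightarrow> map3 red31 P \<in> set (pts31_on L')" if "P \<in> set config_pts" for P
    using embed3_mem_line_of_iff[OF L that] embed3_mem_line_of_iff[OF L' that] eq by simp
  then have "pts31_on L = pts31_on L'"
    unfolding pts31_on_def by (intro filter_cong) (auto simp: config_pts31_def pts31_on_def)
  moreover have "inj_on pts31_on (set config_lines)"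
    using config_pts31_check line_pts31_check by (simp add: line_pts31_eq distinct_map)
  ultimately show "L = L'" using L L' by (auto dest: inj_onD)
qed

lemma sextactic_lines_eq: "sextactic_lines = (\<lambda>L. line_of (embed3 L)) ` set config_lines"
  using sextactic_line_eq_line_of_config_line line_of_config_line_in_sextactic_lines by blast

section \<open>The product of the linear forms\<close>

lemma upt_3: "[0..<3] = [0, 1, 2 :: nat]"
  by (simp add: upt_rec)

lemma upt_6: "[0..<6] = [0, 1, 2, 3, 4, 5 :: nat]"
  by (simp add: upt_rec)

lemma prod_list_map_concat: "prod_list (map f (concat xss)) = prod_list (map (\<lambda>xs. prod_list (map f xs)) xss)"
  by (induction xss) simp_all

context cube_roots
begin

definition lin_form :: "zsplit \<times> zsplit \<times> zsplit \<Rightarrow> 'a \<times> 'a \<times> 'a \<Rightarrow> 'a" where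
  "lin_form c V = dot3 (map3 (zs_eval t w) c) V"

definition forms_prod :: "(zsplit \<times> zsplit \<times> zsplit) list \<Rightarrow> 'a \<times> 'a \<times> 'a \<Rightarrow> 'a" where
  "forms_prod cs V = prod_list (map (\<lambda>c. lin_form c V) cs)"

lemma lin_form_permute3:
  "lin_form (permute3 0 c) (X, Y, Z) = lin_form c (X, Y, Z)"
  "lin_form (permute3 1 c) (X, Y, Z) = lin_form c (Z, X, Y)"
  "lin_form (permute3 2 c) (X, Y, Z) = lin_form c (Y, Z, X)"
  "lin_form (permute3 3 c) (X, Y, Z) = lin_form c (Y, X, Z)"
  "lin_form (permute3 4 c) (X, Y, Z) = lin_form c (Z, Y, X)"
  "lin_form (permute3 5 c) (X, Y, Z) = lin_form c (X, Z, Y)"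
  by (cases c; simp add: permute3_def lin_form_def algebra_simps del: zs_eval.simps)+

lemma prod_cyclic_family:
  "prod_list (map (\<lambda>c. lin_form c (X, Y, Z)) (concat (map (\<lambda>k. map (permute3 k) cs) [0..<3])))
   = forms_prod cs (X, Y, Z) * forms_prod cs (Z, X, Y) * forms_prod cs (Y, Z, X)"
  unfolding upt_3
  by (simp add: prod_list_map_concat o_def lin_form_permute3 lin_form_permute3(2)[unfolded One_nat_def]
      forms_prod_def mult.assoc del: zs_eval.simps)

lemma prod_symmetric_family:
  "prod_list (map (\<lambda>c. lin_form c (X, Y, Z)) (concat (map (\<lambda>k. map (permute3 k) cs) [0..<6])))
   = forms_prod cs (X, Y, Z) * forms_prod cs (Z, X, Y) * forms_prod cs (Y, Z, X)
     * forms_prod cs (Y, X, Z) * forms_prod cs (Z, Y, X) * forms_prod cs (X, Z, Y)"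
  unfolding upt_6
  by (simp add: prod_list_map_concat o_def lin_form_permute3 lin_form_permute3(2)[unfolded One_nat_def]
      forms_prod_def mult.assoc del: zs_eval.simps)

lemma forms_prod_cubic_lines: "forms_prod cubic_lines (X, Y, Z) = X^3 - Y^3"
proof -
  have "forms_prod cubic_lines (X, Y, Z) = (X - Y) * (X - w*Y) * (X - w^2*Y)"
    by (simp add: forms_prod_def cubic_lines_def lin_form_def zs_eval_simps mult.assoc
        del: zs_eval.simps)
  then show ?thesis by (simp only: diff_cubes_factor)
qed

lemma forms_prod_cbrt2_lines: "forms_prod cbrt2_lines (X, Y, Z) = Z^3 + 2*X^3"
proof -
  have "forms_prod cbrt2_lines (X, Y, Z) = (Z + t*X) * (Z + w*(t*X)) * (Z + w^2*(t*X))"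
    by (simp add: forms_prod_def cbrt2_lines_def lin_form_def zs_eval_simps algebra_simps
        del: zs_eval.simps)
  then show ?thesis by (simp only: sum_cubes_factor power_mult_distrib t_cube)
qed

lemma forms_prod_grid_lines:
  "forms_prod grid_lines (X, Y, Z) = (3*(t*w^2 - 1))^3 * sextic (X^3) (Y^3) (Z^3) (X*Y*Z)"
proof -
  have "forms_prod grid_lines (X, Y, Z) = prod_list (map (\<lambda>i. prod_list (map (\<lambda>j.
      (1 + t) * w^i * X + (t^2*w - 1) * w^j * Y + (1 + t*w) * Z) [0,1,2])) [0,1,2])"
    unfolding forms_prod_def grid_lines_def prod_list_map_concat
    by (simp add: lin_form_def zs_eval_simps del: zs_eval.simps)
  then show ?thesis by (simp only: grid_product_sextic)
qed

lemma prod_lin_form_config_lines: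
  "prod_list (map (\<lambda>c. lin_form c (X, Y, Z)) config_lines)
   = ((X^3 - Y^3) * (Z^3 - X^3) * (Y^3 - Z^3))
     * ((Z^3 + 2*X^3) * (Y^3 + 2*Z^3) * (X^3 + 2*Y^3) * (Z^3 + 2*Y^3) * (X^3 + 2*Z^3) * (Y^3 + 2*X^3))
     * ((3*(t*w^2 - 1))^18 * psi (X^3) (Y^3) (Z^3) (X*Y*Z))"
proof -
  have "(3*(t*w^2 - 1))^3 * sextic (X^3) (Y^3) (Z^3) (X*Y*Z) * ((3*(t*w^2 - 1))^3 * sextic (Z^3) (X^3) (Y^3) (Z*X*Y))
      * ((3*(t*w^2 - 1))^3 * sextic (Y^3) (Z^3) (X^3) (Y*Z*X)) * ((3*(t*w^2 - 1))^3 * sextic (Y^3) (X^3) (Z^3) (Y*X*Z))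
      * ((3*(t*w^2 - 1))^3 * sextic (Z^3) (Y^3) (X^3) (Z*Y*X)) * ((3*(t*w^2 - 1))^3 * sextic (X^3) (Z^3) (Y^3) (X*Z*Y))
      = (3*(t*w^2 - 1))^18 * psi (X^3) (Y^3) (Z^3) (X*Y*Z)"
    by (simp only: prod_sextic_permutations[symmetric] mult_ac power_add[symmetric]) simp
  then show ?thesis
    unfolding config_lines_def prod_list.append map_append prod_cyclic_family prod_symmetric_family
      forms_prod_cubic_lines forms_prod_cbrt2_lines forms_prod_grid_lines
    by (simp only: mult_ac)
qed

end

section \<open>Polynomials\<close>

lemma pconst_add: "pconst (a + b) = pconst a + pconst b"
  by (simp add: pconst_def single_add)

lemma pconst_diff: "pconst (a - b) = pconst a - pconst b"
  by (simp add: pconst_def single_diff)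

lemma pconst_mult: "pconst (a * b) = pconst a * pconst b"
  by (simp add: pconst_def mult_single)

lemma pconst_one: "pconst 1 = 1"
  by (simp add: pconst_def)

lemma pconst_power: "pconst (a ^ n) = pconst a ^ n"
  by (induction n) (simp_all add: pconst_one pconst_mult)

lemma pconst_of_int: "pconst (of_int k) = of_int k"
  by (induction k rule: int_induct) (simp_all add: pconst_def single_add single_diff)

lemma pconst_prod: "pconst (\<Prod>x\<in>A. f x) = (\<Prod>x\<in>A. pconst (f x))"
  by (induction A rule: infinite_finite_induct) (simp_all add: pconst_one pconst_mult)

lemma pconst_zs_eval: "pconst (zs_eval t w x) = zs_eval (pconst t) (pconst w) x"
  by (cases x) (simp add: pconst_add pconst_mult pconst_of_int power2_eq_square)

interpretation poly_roots: cube_roots "pconst \<omega>" "pconst \<theta>"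
proof
  show "pconst \<omega> ^ 2 + pconst \<omega> + 1 = 0"
    using pconst_of_int[of 0] by (simp flip: pconst_power pconst_add pconst_one add: omega_min_poly)
  show "pconst \<theta> ^ 3 = 2"
    using pconst_of_int[of 2] by (simp flip: pconst_power add: theta_cube)
qed

lemma integral_poly_add: "integral_poly p \<Longrightarrow> integral_poly q \<Longrightarrow> integral_poly (p + q)"
  by (simp add: integral_poly_def lookup_add)

lemma integral_poly_uminus: "integral_poly p \<Longrightarrow> integral_poly (- p)"
  by (simp add: integral_poly_def)

lemma integral_poly_diff: "integral_poly p \<Longrightarrow> integral_poly q \<Longrightarrow> integral_poly (p - q)"
  by (simp add: integral_poly_def lookup_minus)

lemma integral_poly_mult: "integral_poly p \<Longrightarrow> integral_poly q \<Longrightarrow> integral_poly (p * q)"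
  unfolding integral_poly_def lookup_mult
  by (auto simp: Sum_any.expand_set when_def intro!: Ints_sum Ints_mult)

lemma integral_poly_numeral: "integral_poly (numeral n)"
  by (simp add: integral_poly_def lookup_numeral when_def)

lemma integral_poly_one: "integral_poly 1"
  by (simp add: integral_poly_def lookup_one when_def)

lemma integral_poly_pvar: "integral_poly (pvar i)"
  by (simp add: integral_poly_def pvar_def lookup_single when_def)

lemma integral_poly_power: "integral_poly p \<Longrightarrow> integral_poly (p ^ n)"
  by (induction n) (simp_all add: integral_poly_one integral_poly_mult)

lemmas integral_poly_intros = integral_poly_add integral_poly_uminus integral_poly_diff integral_poly_mult
  integral_poly_numeral integral_poly_one integral_poly_pvar integral_poly_power

lemma integral_poly_psi:
  "integral_poly u \<Longrightarrow> integral_poly v \<Longrightarrow> integral_poly z \<Longrightarrow> integral_poly m \<Longrightarrow> integral_poly (psi u v z m)"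
  unfolding psi_def Let_def circulant_det_def
  by (intro integral_poly_intros | assumption)+

lemma linform_embed3: "linform (embed3 c) = poly_roots.lin_form c (pvar 0, pvar 1, pvar 2)"
  by (cases c) (simp add: linform_def poly_roots.lin_form_def pconst_zs_eval del: zs_eval.simps)

lemma linform_scale3: "linform (scale3 c v) = pconst c * linform v"
  by (cases v) (simp add: linform_def pconst_mult algebra_simps)

lemma theta_omega_square_neq_1: "\<theta> * \<omega>^2 \<noteq> 1"
proof
  assume "\<theta> * \<omega>^2 = 1"
  then have "\<theta>^3 * (\<omega>^3)^2 = 1" by (metis power_mult_distrib power_one power_mult mult.commute[of 2 3])
  then show False using theta_cube complex_roots.w_cube by simp
qed

lemma prod_linform_config_lines:
  "\<exists>G. integral_poly G \<and> (\<Prod>L \<in> set config_lines. linform (embed3 L)) = pconst ((3*(\<theta>*\<omega>^2 - 1))^18) * G"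
proof -
  let ?X = "pvar 0" and ?Y = "pvar 1" and ?Z = "pvar 2"
  define G where "G = ((?X^3 - ?Y^3) * (?Z^3 - ?X^3) * (?Y^3 - ?Z^3))
     * ((?Z^3 + 2*?X^3) * (?Y^3 + 2*?Z^3) * (?X^3 + 2*?Y^3) * (?Z^3 + 2*?Y^3) * (?X^3 + 2*?Z^3) * (?Y^3 + 2*?X^3))
     * psi (?X^3) (?Y^3) (?Z^3) (?X*?Y*?Z)"
  have "integral_poly G" unfolding G_def by (intro integral_poly_intros integral_poly_psi)
  have kappa: "pconst ((3*(\<theta>*\<omega>^2 - 1))^18) = (3*(pconst \<theta> * pconst \<omega>^2 - 1))^18"
    using pconst_of_int[of 3] by (simp add: pconst_power pconst_mult pconst_diff pconst_one)
  have "(\<Prod>L \<in> set config_lines. linform (embed3 L)) = prod_list (map (\<lambda>c. poly_roots.lin_form c (?X, ?Y, ?Z)) config_lines)"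
    by (simp add: prod.distinct_set_conv_list distinct_config_lines linform_embed3 o_def del: map3.simps)
  also have "\<dots> = pconst ((3*(\<theta>*\<omega>^2 - 1))^18) * G"
    unfolding poly_roots.prod_lin_form_config_lines kappa G_def by (simp only: mult_ac)
  finally show ?thesis using \<open>integral_poly G\<close> by blast
qed

lemma line_form_eq_scale3:
  assumes "\<forall>L \<in> sextactic_lines. nonzero3 (lf L) \<and> line_of (lf L) = L" and "L \<in> set config_lines"
  shows "\<exists>s. s \<noteq> 0 \<and> lf (line_of (embed3 L)) = scale3 s (embed3 L)"
proof -
  have "line_of (lf (line_of (embed3 L))) = line_of (embed3 L)" "lf (line_of (embed3 L)) \<noteq> 0"
    using assms line_of_config_line_in_sextactic_lines[OF assms(2)] by (auto simp: nonzero3_iff)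
  then show ?thesis using line_of_eq_imp_scale3 embed3_config_line_neq_0[OF assms(2)] by blast
qed

theorem mainTheorem9:
  fixes lf :: "vec3 set \<Rightarrow> vec3"
  assumes "\<forall>L \<in> sextactic_lines. nonzero3 (lf L) \<and> line_of (lf L) = L"
  shows "\<exists>c::complex. c \<noteq> 0 \<and>
           integral_poly (pconst c * (\<Prod>L \<in> sextactic_lines. linform (lf L)))"
proof -
  obtain s where s: "\<And>L. L \<in> set config_lines \<Longrightarrow> s L \<noteq> 0 \<and> lf (line_of (embed3 L)) = scale3 (s L) (embed3 L)"
    using line_form_eq_scale3[OF assms] by metis
  obtain G where "integral_poly G"
    and G: "(\<Prod>L \<in> set config_lines. linform (embed3 L)) = pconst ((3*(\<theta>*\<omega>^2 - 1))^18) * G"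
    using prod_linform_config_lines by blast
  define K where "K = (\<Prod>L \<in> set config_lines. s L) * (3*(\<theta>*\<omega>^2 - 1))^18"
  have "K \<noteq> 0" using s theta_omega_square_neq_1 by (simp add: K_def)
  have "(\<Prod>L \<in> sextactic_lines. linform (lf L)) = (\<Prod>L \<in> set config_lines. pconst (s L) * linform (embed3 L))"
    unfolding sextactic_lines_eq prod.reindex[OF line_of_embed3_inj_on_config_lines]
    by (rule prod.cong) (simp_all add: s linform_scale3)
  also have "\<dots> = pconst K * G"
    by (simp add: prod.distrib pconst_prod G K_def pconst_mult mult.assoc)
  finally have "pconst (inverse K) * (\<Prod>L \<in> sextactic_lines. linform (lf L)) = pconst (inverse K * K) * G"
    by (simp add: pconst_mult mult.assoc)
  then show ?thesis using \<open>integral_poly G\<close> \<open>K \<noteq> 0\<close> by (intro exI[of _ "inverse K"]) (simp add: pconst_one)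
qed

end
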